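(* The bialgebra $U_{K,L,norm}$ (with $\Delta,\varepsilon$ as in the context) admits no linear map $\mathsf{S}:U_{K,L,norm}\to U_{K,L,norm}$ satisfying $\mathsf{S}\star\mathsf{id}=\mathsf{id}\star\mathsf{S}=\eta\circ\varepsilon$.
   Context: Fix $q\in\mathbb{C}$, $q\neq 0,\pm1$. $U_{K,L,norm}$ is the unital associative $\mathbb{C}$-algebra generated by $K,\overline{K},L,\overline{L},E,F$ subject to $K\overline{K}K=K$, $\overline{K}K\overline{K}=\overline{K}$, $K\overline{K}=\overline{K}K$, $L\overline{L}L=L$, $\overline{L}L\overline{L}=\overline{L}$, $L\overline{L}=\overline{L}L$, $K\overline{K}+L\overline{L}=\mathbf{1}$, $KE=q^2EK$, $LE=q^2EL$, $\overline{K}E=q^{-2}E\overline{K}$, $\overline{L}E=q^{-2}E\overline{L}$, $KF=q^{-2}FK$, $LF=q^{-2}FL$, $\overline{K}F=q^2F\overline{K}$, $\overline{L}F=q^2F\overline{L}$, $EF-FE=\frac{(K+L)-(\overline{K}+\overline{L})}{q-q^{-1}}$. It is a bialgebra with the algebra homomorphisms $\Delta:U\to U\otimes U$, $\varepsilon:U\to\mathbb{C}$ determined by $\Delta(K)=K\otimes K$, $\Delta(\overline{K})=\overline{K}\otimes\overline{K}$, $\Delta(L)=L\otimes L+L\otimes K+K\otimes L$, $\Delta(\overline{L})=\overline{L}\otimes\overline{L}+\overline{L}\otimes\overline{K}+\overline{K}\otimes\overline{L}$, $\Delta(E)=\mathbf{1}\otimes E+E\otimes(K+L)$, $\Delta(F)=F\otimes\mathbf{1}+(\overline{K}+\overline{L})\otimes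 F$, $\varepsilon(K)=\varepsilon(\overline{K})=1$, $\varepsilon(L)=\varepsilon(\overline{L})=\varepsilon(E)=\varepsilon(F)=0$. For linear maps $A,B$ of $U$, the convolution is $A\star B=\mu\circ(A\otimes B)\circ\Delta$, where $\mu$ is the multiplication; $\eta:\mathbb{C}\to U$ is the unit map $\lambda\mapsto\lambda\mathbf{1}$. *)

theory Defs
  imports Main "HOL.Complex"
begin

datatype gen = gK | gKb | gL | gLb | gE | gF

text \<open>Elements of the free unital associative C-algebra on gen are finitely supported
  functions from words (gen list) to complex coefficients.\<close>

type_synonym fel = "gen list \<Rightarrow> complex"

definition fa :: "fel set" where
  "fa = {x. finite {w. x w \<noteq> 0}}"

definition fzero :: fel where "fzero = (\<lambda>_. 0)"
definition fadd :: "fel \<Rightarrow> fel \<Rightarrow> fel" where "fadd x y = (\<lambda>w. x w + y w)"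
definition fsmul :: "complex \<Rightarrow> fel \<Rightarrow> fel" where "fsmul c x = (\<lambda>w. c * x w)"
definition fsub :: "fel \<Rightarrow> fel \<Rightarrow> fel" where "fsub x y = (\<lambda>w. x w - y w)"

definition fmul :: "fel \<Rightarrow> fel \<Rightarrow> fel" where
  "fmul x y = (\<lambda>w. \<Sum>i\<le>length w. x (take i w) * y (drop i w))"

definition mon :: "gen list \<Rightarrow> fel" where
  "mon w = (\<lambda>v. if v = w then 1 else 0)"

definition fone :: fel where "fone = mon []"

definition fsum :: "fel list \<Rightarrow> fel" where
  "fsum xs = foldr fadd xs fzero"

definition rels :: "complex \<Rightarrow> fel list" where
  "rels q = [
    fsub (mon [gK, gKb, gK]) (mon [gK]),
    fsub (mon [gKb, gK, gKb]) (mon [gKb]),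
    fsub (mon [gK, gKb]) (mon [gKb, gK]),
    fsub (mon [gL, gLb, gL]) (mon [gL]),
    fsub (mon [gLb, gL, gLb]) (mon [gLb]),
    fsub (mon [gL, gLb]) (mon [gLb, gL]),
    fsub (fadd (mon [gK, gKb]) (mon [gL, gLb])) fone,
    fsub (mon [gK, gE]) (fsmul (q^2) (mon [gE, gK])),
    fsub (mon [gL, gE]) (fsmul (q^2) (mon [gE, gL])),
    fsub (mon [gKb, gE]) (fsmul (inverse (q^2)) (mon [gE, gKb])),
    fsub (mon [gLb, gE]) (fsmul (inverse (q^2)) (mon [gE, gLb])),
    fsub (mon [gK, gF]) (fsmul (inverse (q^2)) (mon [gF, gK])),
    fsub (mon [gL, gF]) (fsmul (inverse (q^2)) (mon [gF, gL])),
    fsub (mon [gKb, gF]) (fsmul (q^2) (mon [gF, gKb])),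
    fsub (mon [gLb, gF]) (fsmul (q^2) (mon [gF, gLb])),
    fsub (fsub (mon [gE, gF]) (mon [gF, gE]))
         (fsmul (inverse (q - inverse q))
            (fsub (fadd (mon [gK]) (mon [gL])) (fadd (mon [gKb]) (mon [gLb]))))
  ]"

inductive_set rel_ideal :: "complex \<Rightarrow> fel set" for q :: complex where
  gen_rel: "r \<in> set (rels q) \<Longrightarrow> a \<in> fa \<Longrightarrow> b \<in> fa \<Longrightarrow> fmul (fmul a r) b \<in> rel_ideal q"
| zero: "fzero \<in> rel_ideal q"
| add: "x \<in> rel_ideal q \<Longrightarrow> y \<in> rel_ideal q \<Longrightarrow> fadd x y \<in> rel_ideal q"

text \<open>Equality in U_{K,L,norm} = free algebra / rel_ideal.\<close>
definition eqU :: "complex \<Rightarrow> fel \<Rightarrow> fel \<Rightarrow> bool" where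
  "eqU q x y \<longleftrightarrow> fsub x y \<in> rel_ideal q"

text \<open>Delta of a generator as a list of pure tensors (left word, right word), all with
  coefficient 1; e.g. Delta(E) = 1 (x) E + E (x) K + E (x) L.\<close>
fun dgen :: "gen \<Rightarrow> (gen list \<times> gen list) list" where
  "dgen gK = [([gK], [gK])]"
| "dgen gKb = [([gKb], [gKb])]"
| "dgen gL = [([gL], [gL]), ([gL], [gK]), ([gK], [gL])]"
| "dgen gLb = [([gLb], [gLb]), ([gLb], [gKb]), ([gKb], [gLb])]"
| "dgen gE = [([], [gE]), ([gE], [gK]), ([gE], [gL])]"
| "dgen gF = [([gF], []), ([gKb], [gF]), ([gLb], [gF])]"

text \<open>Delta of the word g1...gn = Delta(g1)...Delta(gn) (Delta is an algebra map),
  expanded as a list of pure tensors of words.\<close>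
fun dword :: "gen list \<Rightarrow> (gen list \<times> gen list) list" where
  "dword [] = [([], [])]"
| "dword (g # w) = [(a @ a', b @ b'). (a, b) \<leftarrow> dgen g, (a', b') \<leftarrow> dword w]"

definition epsw :: "gen list \<Rightarrow> complex" where
  "epsw w = (if set w \<subseteq> {gK, gKb} then 1 else 0)"

text \<open>Convolution (A * B)(w) = mu (A (x) B) Delta(w), evaluated on the word w.\<close>
definition conv :: "(fel \<Rightarrow> fel) \<Rightarrow> (fel \<Rightarrow> fel) \<Rightarrow> gen list \<Rightarrow> fel" where
  "conv A B w = fsum (map (\<lambda>(a, b). fmul (A (mon a)) (B (mon b))) (dword w))"

text \<open>A C-linear endomorphism of U, given by a C-linear map of the free algebra that
  preserves the defining ideal (every linear endomorphism of U lifts this way).\<close>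
definition linU :: "complex \<Rightarrow> (fel \<Rightarrow> fel) \<Rightarrow> bool" where
  "linU q S \<longleftrightarrow> (\<forall>x\<in>fa. S x \<in> fa)
     \<and> (\<forall>x\<in>fa. \<forall>y\<in>fa. S (fadd x y) = fadd (S x) (S y))
     \<and> (\<forall>c. \<forall>x\<in>fa. S (fsmul c x) = fsmul c (S x))
     \<and> (\<forall>x\<in>rel_ideal q. S x \<in> rel_ideal q)"

end

theory Submission
  imports Defs
begin

(* Idea: the grouplike element K cannot be invertible in U, so no antipode exists.
   If S were an antipode, the counit law for Delta(K) = K (x) K would give
   S(K) K = 1 in U.  We exhibit a character chi : U -> C (an algebra homomorphism)
   with chi(K) = 0: it sends L and Lbar to 1 and K, Kbar, E, F to 0, which is
   compatible with all defining relations (K Kbar + L Lbar = 1 holds as 0 + 1 = 1).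
   Applying chi to S(K) K = 1 yields 0 = 1.  The argument uses only the counit law
   S * id = eta o eps at K and works for every value of q. *)

definition supp :: "fel \<Rightarrow> gen list set" where
  "supp x = {w. x w \<noteq> 0}"

lemma fa_iff_finite_supp: "x \<in> fa \<longleftrightarrow> finite (supp x)"
  by (simp add: fa_def supp_def)

lemma fa_fadd: "x \<in> fa \<Longrightarrow> y \<in> fa \<Longrightarrow> fadd x y \<in> fa"
  unfolding fa_def fadd_def
  by (auto intro: finite_subset[of _ "{w. x w \<noteq> 0} \<union> {w. y w \<noteq> 0}"])

lemma fa_fsmul: "x \<in> fa \<Longrightarrow> fsmul c x \<in> fa"
  unfolding fa_def fsmul_def by (auto intro: finite_subset[of _ "{w. x w \<noteq> 0}"])

lemma fsub_as_fadd: "fsub x y = fadd x (fsmul (-1) y)"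
  by (simp add: fsub_def fadd_def fsmul_def)

lemma fa_fsub: "x \<in> fa \<Longrightarrow> y \<in> fa \<Longrightarrow> fsub x y \<in> fa"
  by (simp add: fsub_as_fadd fa_fadd fa_fsmul)

lemma fa_mon: "mon w \<in> fa"
  unfolding fa_def mon_def by auto

lemma fa_fzero: "fzero \<in> fa"
  unfolding fa_def fzero_def by auto

lemma supp_fmul: "supp (fmul x y) \<subseteq> (\<lambda>(u, v). u @ v) ` (supp x \<times> supp y)"
proof
  fix w assume "w \<in> supp (fmul x y)"
  then have "(\<Sum>i\<le>length w. x (take i w) * y (drop i w)) \<noteq> 0"
    by (simp add: supp_def fmul_def)
  then obtain i where "x (take i w) * y (drop i w) \<noteq> 0"
    by (meson sum.neutral)
  then have "(take i w, drop i w) \<in> supp x \<times> supp y" by (simp add: supp_def)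
  then show "w \<in> (\<lambda>(u, v). u @ v) ` (supp x \<times> supp y)"
    by (intro image_eqI[of _ _ "(take i w, drop i w)"]) auto
qed

lemma fa_fmul: "x \<in> fa \<Longrightarrow> y \<in> fa \<Longrightarrow> fmul x y \<in> fa"
  unfolding fa_iff_finite_supp by (auto intro: finite_subset[OF supp_fmul])

lemmas fa_closed = fa_fadd fa_fsub fa_fsmul fa_mon fa_fzero fa_fmul

lemma fmul_as_splitting_sum:
  "fmul x y w = (\<Sum>p\<in>{p \<in> supp x \<times> supp y. fst p @ snd p = w}. x (fst p) * y (snd p))"
proof -
  let ?split = "\<lambda>i. (take i w, drop i w)"
  have splittings: "?split ` {..length w} = {p. fst p @ snd p = w}"
  proof
    show "{p. fst p @ snd p = w} \<subseteq> ?split ` {..length w}"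
    proof
      fix p assume "p \<in> {p. fst p @ snd p = w}"
      then have "p = ?split (length (fst p))" and "length (fst p) \<le> length w" by auto
      then show "p \<in> ?split ` {..length w}" by blast
    qed
  qed auto
  have "inj_on ?split {..length w}"
    by (rule inj_onI) (metis atMost_iff length_take min.absorb2 prod.inject)
  then have "fmul x y w = (\<Sum>p\<in>?split ` {..length w}. x (fst p) * y (snd p))"
    by (simp add: fmul_def sum.reindex)
  also have "\<dots> = (\<Sum>p\<in>{p \<in> supp x \<times> supp y. fst p @ snd p = w}. x (fst p) * y (snd p))"
    unfolding splittings
    by (rule sum.mono_neutral_right) (use splittings[symmetric] in \<open>auto simp: supp_def\<close>)
  finally show ?thesis .
qed

definition lin_ext :: "(gen list \<Rightarrow> complex) \<Rightarrow> fel \<Rightarrow> complex" where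
  "lin_ext phi x = (\<Sum>w\<in>supp x. x w * phi w)"

lemma lin_ext_over:
  assumes "finite T" "supp x \<subseteq> T"
  shows "lin_ext phi x = (\<Sum>w\<in>T. x w * phi w)"
  unfolding lin_ext_def by (rule sum.mono_neutral_left) (use assms in \<open>auto simp: supp_def\<close>)

lemma lin_ext_fadd:
  assumes "x \<in> fa" "y \<in> fa"
  shows "lin_ext phi (fadd x y) = lin_ext phi x + lin_ext phi y"
proof -
  define T where "T = supp x \<union> supp y"
  have "finite T" using assms by (simp add: T_def fa_iff_finite_supp)
  moreover have "supp (fadd x y) \<subseteq> T" "supp x \<subseteq> T" "supp y \<subseteq> T"
    by (auto simp: T_def supp_def fadd_def)
  ultimately show ?thesis
    by (simp add: lin_ext_over[of T] fadd_def distrib_right sum.distrib)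
qed

lemma lin_ext_fsmul:
  assumes "x \<in> fa"
  shows "lin_ext phi (fsmul c x) = c * lin_ext phi x"
proof -
  have "supp (fsmul c x) \<subseteq> supp x" by (auto simp: supp_def fsmul_def)
  then show ?thesis
    using assms by (simp add: lin_ext_over[of "supp x"] fa_iff_finite_supp fsmul_def
        sum_distrib_left mult.assoc)
qed

lemma lin_ext_fsub:
  assumes "x \<in> fa" "y \<in> fa"
  shows "lin_ext phi (fsub x y) = lin_ext phi x - lin_ext phi y"
  using assms by (simp add: fsub_as_fadd lin_ext_fadd lin_ext_fsmul fa_fsmul)

lemma lin_ext_mon: "lin_ext phi (mon w) = phi w"
  by (subst lin_ext_over[of "{w}"]) (auto simp: mon_def supp_def)

lemma lin_ext_fzero: "lin_ext phi fzero = 0"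
  by (simp add: lin_ext_def fzero_def)

lemma lin_ext_fmul:
  assumes mult: "\<And>u v. phi (u @ v) = phi u * phi v"
    and "x \<in> fa" "y \<in> fa"
  shows "lin_ext phi (fmul x y) = lin_ext phi x * lin_ext phi y"
proof -
  let ?P = "supp x \<times> supp y" and ?cat = "\<lambda>p. fst p @ snd p"
  have finP: "finite ?P" using assms(2,3) by (simp add: fa_iff_finite_supp)
  have "supp (fmul x y) \<subseteq> ?cat ` ?P"
    using supp_fmul by (auto simp: case_prod_beta')
  then have "lin_ext phi (fmul x y) = (\<Sum>w\<in>?cat ` ?P. fmul x y w * phi w)"
    using finP by (simp add: lin_ext_over)
  also have "\<dots> = (\<Sum>w\<in>?cat ` ?P. \<Sum>p\<in>{p \<in> ?P. ?cat p = w}. x (fst p) * y (snd p) * phi (?cat p))"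
    by (rule sum.cong) (auto simp: fmul_as_splitting_sum sum_distrib_right)
  also have "\<dots> = (\<Sum>p\<in>?P. x (fst p) * y (snd p) * phi (?cat p))"
    by (rule sum.image_gen[symmetric]) (rule finP)
  also have "\<dots> = (\<Sum>p\<in>?P. (x (fst p) * phi (fst p)) * (y (snd p) * phi (snd p)))"
    by (simp add: mult mult_ac)
  also have "\<dots> = lin_ext phi x * lin_ext phi y"
    by (simp add: lin_ext_def sum_product sum.cartesian_product split_def)
  finally show ?thesis .
qed

definition L_weight :: "gen list \<Rightarrow> complex" where
  "L_weight w = (if set w \<subseteq> {gL, gLb} then 1 else 0)"

lemma L_weight_append: "L_weight (u @ v) = L_weight u * L_weight v"
  by (auto simp: L_weight_def)

abbreviation chiL :: "fel \<Rightarrow> complex" where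
  "chiL \<equiv> lin_ext L_weight"

lemmas chiL_simps = lin_ext_fadd lin_ext_fsub lin_ext_fsmul lin_ext_mon lin_ext_fzero
  lin_ext_fmul[OF L_weight_append]

lemma rels_killed: "r \<in> set (rels q) \<Longrightarrow> r \<in> fa \<and> chiL r = 0"
proof -
  have "list_all (\<lambda>r. r \<in> fa \<and> chiL r = 0) (rels q)"
    unfolding rels_def fone_def by (simp add: fa_closed chiL_simps L_weight_def)
  then show "r \<in> set (rels q) \<Longrightarrow> r \<in> fa \<and> chiL r = 0"
    by (simp add: list_all_iff)
qed

lemma rel_ideal_killed: "x \<in> rel_ideal q \<Longrightarrow> x \<in> fa \<and> chiL x = 0"
proof (induction rule: rel_ideal.induct)
  case (gen_rel r a b)
  then show ?case using rels_killed[OF gen_rel(1)] by (simp add: fa_closed chiL_simps)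
qed (auto simp: fa_closed chiL_simps)

text \<open>K is not left invertible in U: no element s satisfies s K = 1,
  since chiL(s K) = chiL(s) * 0 while chiL(1) = 1.\<close>
lemma K_not_left_invertible:
  assumes "s \<in> fa"
  shows "\<not> eqU q (fmul s (mon [gK])) fone"
proof
  assume "eqU q (fmul s (mon [gK])) fone"
  then have "chiL (fsub (fmul s (mon [gK])) fone) = 0"
    using rel_ideal_killed by (simp add: eqU_def)
  moreover have "chiL (fsub (fmul s (mon [gK])) fone) = -1"
    using assms by (simp add: fone_def fa_closed chiL_simps L_weight_def)
  ultimately show False by simp
qed

text \<open>Since Delta(K) = K (x) K, the convolution (S * id) evaluated at K is S(K) K.\<close>
lemma conv_at_K: "conv A B [gK] = fadd (fmul (A (mon [gK])) (B (mon [gK]))) fzero"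
  by (simp add: conv_def fsum_def)

theorem proposition8:
  fixes q :: complex
  assumes "q \<noteq> 0" and "q \<noteq> 1" and "q \<noteq> -1"
  shows "\<not> (\<exists>S. linU q S
              \<and> (\<forall>w. eqU q (conv S id w) (fsmul (epsw w) fone))
              \<and> (\<forall>w. eqU q (conv id S w) (fsmul (epsw w) fone)))"
proof
  assume "\<exists>S. linU q S
              \<and> (\<forall>w. eqU q (conv S id w) (fsmul (epsw w) fone))
              \<and> (\<forall>w. eqU q (conv id S w) (fsmul (epsw w) fone))"
  then obtain S where lin: "linU q S"
    and counit_K: "eqU q (conv S id [gK]) (fsmul (epsw [gK]) fone)"
    by blast
  have "S (mon [gK]) \<in> fa" using lin fa_mon by (simp add: linU_def)
  moreover have "eqU q (fmul (S (mon [gK])) (mon [gK])) fone"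
    using counit_K by (simp add: conv_at_K epsw_def eqU_def fadd_def fzero_def fsmul_def)
  ultimately show False using K_not_left_invertible by blast
qed

end
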